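(* Let $X,Z\in\mathbb{R}^{n\times r}$ with $XX^{T}\ne ZZ^{T}$, and let $r^{\star}=\mathrm{rank}(Z)$ with $1\le r^{\star}\le r$. Let $Z_{\perp}=(I-XX^{\dagger})Z$, $$\alpha=\frac{\|Z_{\perp}Z_{\perp}^{T}\|_{F}}{\|XX^{T}-ZZ^{T}\|_{F}},\qquad\beta=\frac{\sigma_{\min}^{2}(X)}{\|XX^{T}-ZZ^{T}\|_{F}}\cdot\frac{\mathrm{tr}(Z_{\perp}Z_{\perp}^{T})}{\|Z_{\perp}Z_{\perp}^{T}\|_{F}}.$$ Then: (1) if $\beta\le\alpha$, then $\alpha^{2}+(r/r^{\star})\beta^{2}\le1$; (2) if $\beta\ge\alpha$, then $\alpha\le1/\sqrt{1+r/r^{\star}}$.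
   Context: $A^{\dagger}$ is the Moore–Penrose pseudoinverse and $\sigma_{\min}(X)$ the $r$-th singular value of $X$. When $Z_{\perp}=0$, $\beta$ may be taken as $\sigma_{\min}^{2}(X)/\|XX^{T}-ZZ^{T}\|_{F}$. *)

theory Defs
  imports "HOL-Analysis.Analysis"
begin

definition frob_norm :: "real^'n^'m \<Rightarrow> real" where
  "frob_norm A = sqrt (\<Sum>i\<in>UNIV. \<Sum>j\<in>UNIV. (A$i$j)^2)"

definition pinv :: "real^'n^'m \<Rightarrow> real^'m^'n" where
  "pinv A = (THE B. A ** B ** A = A \<and> B ** A ** B = B \<and>
                    transpose (A ** B) = A ** B \<and> transpose (B ** A) = B ** A)"

definition min_eigenvalue :: "real^'n^'n \<Rightarrow> real" where
  "min_eigenvalue A = Min {c. \<exists>v. v \<noteq> 0 \<and> A *v v = c *\<^sub>R v}"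

definition sigma_min :: "real^'r^'n \<Rightarrow> real" where
  "sigma_min X = sqrt (min_eigenvalue (transpose X ** X))"

end

theory Submission
  imports Defs
begin

text \<open>Write \<open>P = X X\<^sup>\<dagger>\<close> (the orthogonal projection onto the column space of \<open>X\<close>),
  \<open>Z\<^sub>1 = P Z\<close>, \<open>Zp = (I - P) Z\<close>, \<open>s = \<sigma>\<^sub>m\<^sub>i\<^sub>n\<^sup>2(X)\<close>, \<open>t = \<parallel>Zp\<parallel>\<^sup>2 = tr(Zp Zp\<^sup>T)\<close>,
  \<open>F = \<parallel>Zp Zp\<^sup>T\<parallel>\<^sup>2\<close> and \<open>D = \<parallel>X X\<^sup>T - Z Z\<^sup>T\<parallel>\<close>, so that \<open>\<alpha> = \<surd>F / D\<close> and \<open>\<beta> = s t / (D \<surd>F)\<close>.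
  The block decomposition of \<open>X X\<^sup>T - Z Z\<^sup>T\<close> with respect to \<open>P\<close> gives
  \<open>D\<^sup>2 - F = \<parallel>X X\<^sup>T - Z\<^sub>1 Z\<^sub>1\<^sup>T\<parallel>\<^sup>2 + 2 \<parallel>Z\<^sub>1 Zp\<^sup>T\<parallel>\<^sup>2\<close>.
  If \<open>s > 0\<close>, take an orthonormal eigenbasis \<open>E\<close> of \<open>Z\<^sub>1 Z\<^sub>1\<^sup>T\<close> on the \<open>r\<close>-dimensional column
  space of \<open>X\<close>; there \<open>e\<^sup>T X X\<^sup>T e \<ge> s\<close>. The nonzero \<open>Z\<^sub>1\<^sup>T e\<close>, normalised, are orthonormal in the
  \<open>r\<^sup>\<star>\<close>-dimensional row space of \<open>Z\<close> and extend to an orthonormal basis \<open>B\<close> of it, with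
  \<open>t = \<Sum>\<^sub>b \<parallel>Zp b\<parallel>\<^sup>2\<close> and \<open>\<Sum>\<^sub>b \<parallel>Zp b\<parallel>\<^sup>4 \<le> F\<close>. Estimating both norms on the right by their
  diagonal entries along \<open>E\<close>, and pairing each \<open>e\<close> with its image in \<open>B\<close>, gives for every
  \<open>c \<in> [0,1]\<close>
  \<open>(r - r\<^sup>\<star>) s\<^sup>2 + 2 c s t - c\<^sup>2 F \<le> D\<^sup>2 - F\<close>
  (trivially if \<open>s = 0\<close>); Cauchy--Schwarz over \<open>B\<close> gives \<open>t\<^sup>2 \<le> r\<^sup>\<star> F\<close>. Choosing \<open>c = s t / F\<close>
  when \<open>\<beta> \<le> \<alpha>\<close> (that is, \<open>s t \<le> F\<close>) and \<open>c = 1\<close> otherwise yields the two claims.\<close>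

declare transpose_matrix_vector [simp del]

section \<open>Orthonormal sets\<close>

definition orthonormal :: "'a::real_inner set \<Rightarrow> bool" where
  "orthonormal B \<longleftrightarrow> pairwise orthogonal B \<and> (\<forall>b\<in>B. norm b = 1)"

lemma orthonormal_inner:
  assumes "orthonormal B" "b \<in> B" "c \<in> B"
  shows "b \<bullet> c = (if b = c then 1 else 0)"
  using assms by (auto simp: orthonormal_def pairwise_def orthogonal_def dot_square_norm)

lemma orthonormal_independent:
  fixes B :: "'a::euclidean_space set"
  assumes "orthonormal B"
  shows "independent B"
  using assms by (intro pairwise_orthogonal_independent) (auto simp: orthonormal_def)

lemma orthonormal_finite:
  fixes B :: "'a::euclidean_space set"
  assumes "orthonormal B"
  shows "finite B"
  using orthonormal_independent[OF assms] independent_imp_finite by blast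

lemma orthonormal_coeff:
  fixes B :: "'a::euclidean_space set"
  assumes "orthonormal B" "b \<in> B"
  shows "b \<bullet> (\<Sum>c\<in>B. f c *\<^sub>R c) = f b"
  using orthonormal_finite[OF assms(1)] assms
  by (simp add: inner_sum_right orthonormal_inner if_distrib cong: if_cong)

lemma orthonormal_expand:
  fixes B :: "'a::euclidean_space set"
  assumes "orthonormal B" "x \<in> span B"
  shows "(\<Sum>b\<in>B. (b \<bullet> x) *\<^sub>R b) = x"
  using orthonormal_basis_expand[of B x] assms orthonormal_finite[OF assms(1)]
  by (simp add: orthonormal_def inner_commute)

lemma orthonormal_parseval:
  fixes B :: "'a::euclidean_space set"
  assumes "orthonormal B" "x \<in> span B"
  shows "x \<bullet> y = (\<Sum>b\<in>B. (b \<bullet> x) * (b \<bullet> y))"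
  by (subst (1) orthonormal_expand[OF assms, symmetric]) (simp add: inner_sum_left)

lemma orthonormal_parseval_norm:
  fixes B :: "'a::euclidean_space set"
  assumes "orthonormal B" "x \<in> span B"
  shows "x \<bullet> x = (\<Sum>b\<in>B. (x \<bullet> b)\<^sup>2)"
  using orthonormal_parseval[OF assms, of x] by (simp add: power2_eq_square inner_commute)

lemma orthonormal_bessel:
  fixes B :: "'a::euclidean_space set"
  assumes "orthonormal B"
  shows "(\<Sum>b\<in>B. (x \<bullet> b)\<^sup>2) \<le> x \<bullet> x"
proof -
  define p where "p = (\<Sum>b\<in>B. (x \<bullet> b) *\<^sub>R b)"
  have "b \<bullet> p = x \<bullet> b" if "b \<in> B" for b
    unfolding p_def by (rule orthonormal_coeff[OF assms that])
  then have "p \<bullet> p = (\<Sum>b\<in>B. (x \<bullet> b)\<^sup>2)"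
    by (subst (1) p_def) (simp add: inner_sum_left power2_eq_square)
  moreover have "x \<bullet> p = (\<Sum>b\<in>B. (x \<bullet> b)\<^sup>2)"
    by (simp add: p_def inner_sum_right power2_eq_square)
  moreover have "0 \<le> (x - p) \<bullet> (x - p)"
    by simp
  ultimately show ?thesis
    by (simp add: inner_diff inner_commute)
qed

lemma orthonormal_extend:
  fixes V :: "'a::euclidean_space set"
  assumes "orthonormal V" "V \<subseteq> S" "subspace S"
  obtains B where "V \<subseteq> B" "B \<subseteq> S" "orthonormal B" "span B = S"
proof -
  define U where "U = {x \<in> S. \<forall>v\<in>V. v \<bullet> x = 0}"
  have "subspace U"
    using assms(3) by (auto simp: U_def subspace_def inner_add_right)
  then obtain B' where B': "B' \<subseteq> U" "pairwise orthogonal B'" "\<And>x. x \<in> B' \<Longrightarrow> norm x = 1"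
    "span B' = U"
    by (rule orthonormal_basis_subspace) blast
  have "v \<bullet> b = 0" "b \<bullet> v = 0" if "v \<in> V" "b \<in> B'" for v b
    using that B'(1) by (auto simp: U_def inner_commute)
  then have orth: "orthonormal (V \<union> B')"
    using assms(1) B'(2,3) unfolding orthonormal_def pairwise_def orthogonal_def by blast
  have "S \<subseteq> span (V \<union> B')"
  proof
    fix x assume "x \<in> S"
    define p where "p = (\<Sum>v\<in>V. (x \<bullet> v) *\<^sub>R v)"
    have "p \<in> S"
      unfolding p_def using assms(2,3) by (intro subspace_sum subspace_scale) auto
    have "v \<bullet> p = x \<bullet> v" if "v \<in> V" for v
      unfolding p_def by (rule orthonormal_coeff[OF assms(1) that])
    then have "x - p \<in> U"
      using \<open>x \<in> S\<close> \<open>p \<in> S\<close> assms(3) by (simp add: U_def subspace_diff inner_diff_right inner_commute)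
    then have "x - p \<in> span (V \<union> B')"
      using B'(4) span_mono[of B' "V \<union> B'"] by blast
    moreover have "p \<in> span (V \<union> B')"
      unfolding p_def by (intro span_sum span_scale span_base) blast
    ultimately show "x \<in> span (V \<union> B')"
      using span_add by fastforce
  qed
  moreover have "B' \<subseteq> S"
    using B'(1) by (auto simp: U_def)
  moreover from this have "span (V \<union> B') \<subseteq> S"
    using assms(2,3) by (intro span_minimal) auto
  ultimately show thesis
    using that[of "V \<union> B'"] orth assms(2) by blast
qed

section \<open>Spectral theorem for symmetric matrices\<close>

lemma inner_transpose_matrix_vector:
  "(transpose A *v x) \<bullet> y = x \<bullet> ((A::real^'n^'m) *v y)"
  by (simp add: transpose_matrix_vector dot_lmul_matrix)

lemma inner_symmetric_matrix_vector:
  assumes "transpose G = G"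
  shows "(G *v x) \<bullet> y = x \<bullet> ((G::real^'n^'n) *v y)"
  using inner_transpose_matrix_vector[of G] assms by simp

lemma symmetric_matrix_if_inner:
  fixes M :: "real^'n^'n"
  assumes "\<And>x y. (M *v x) \<bullet> y = x \<bullet> (M *v y)"
  shows "transpose M = M"
proof -
  have "(transpose M *v x - M *v x) \<bullet> y = 0" for x y
    using inner_transpose_matrix_vector[of M x y] assms[of x y] by (simp add: inner_diff_left)
  then show ?thesis
    by (metis eq_iff_diff_eq_0 inner_eq_zero_iff matrix_eq)
qed

lemma quadratic_nonpos_imp_linear_coeff_0:
  fixes a b :: real
  assumes "\<And>e. 2 * e * a + e\<^sup>2 * b \<le> 0"
  shows "a = 0"
proof -
  define c where "c = \<bar>b\<bar> + 1"
  have "c > 0" "2 * c + b > 0"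
    by (auto simp: c_def)
  have "a\<^sup>2 * (2 * c + b) = (2 * (a / c) * a + (a / c)\<^sup>2 * b) * c\<^sup>2"
    using \<open>c > 0\<close> by (simp add: field_simps power2_eq_square)
  also have "\<dots> \<le> 0"
    using assms[of "a / c"] by (simp add: mult_nonpos_nonneg)
  finally have "a\<^sup>2 \<le> 0"
    using \<open>2 * c + b > 0\<close> by (simp add: mult_le_0_iff)
  then show ?thesis by simp
qed

lemma rayleigh_maximizer_is_eigenvector:
  fixes G :: "real^'n^'n"
  assumes sym: "transpose G = G" and S: "subspace S" "\<forall>x\<in>S. G *v x \<in> S"
    and v: "v \<in> S" "v \<bullet> v = 1"
    and max: "\<And>y. y \<in> S \<Longrightarrow> y \<bullet> (G *v y) \<le> (v \<bullet> (G *v v)) * (y \<bullet> y)"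
  shows "G *v v = (v \<bullet> (G *v v)) *\<^sub>R v"
proof -
  define l where "l = v \<bullet> (G *v v)"
  define w where "w = G *v v - l *\<^sub>R v"
  have "w \<in> S"
    using S v(1) by (simp add: w_def subspace_diff subspace_scale)
  \<comment> \<open>First-order optimality of \<open>v\<close> in the direction \<open>w \<in> S\<close>.\<close>
  have "w \<bullet> (G *v v) - l * (v \<bullet> w) = 0"
  proof (rule quadratic_nonpos_imp_linear_coeff_0)
    fix e :: real
    have "v + e *\<^sub>R w \<in> S"
      using S(1) v(1) \<open>w \<in> S\<close> by (simp add: subspace_add subspace_scale)
    from max[OF this] have "l + 2 * e * (w \<bullet> (G *v v)) + e\<^sup>2 * (w \<bullet> (G *v w))
        \<le> l * (1 + 2 * e * (v \<bullet> w) + e\<^sup>2 * (w \<bullet> w))"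
      using inner_symmetric_matrix_vector[OF sym, of w v] v(2)
      by (simp add: l_def matrix_vector_right_distrib matrix_vector_mult_scaleR inner_add_left
          inner_add_right power2_eq_square algebra_simps inner_commute)
    then show "2 * e * (w \<bullet> (G *v v) - l * (v \<bullet> w)) + e\<^sup>2 * (w \<bullet> (G *v w) - l * (w \<bullet> w)) \<le> 0"
      by (simp add: algebra_simps)
  qed
  then have "w \<bullet> w = 0"
    by (simp add: w_def inner_diff_left inner_diff_right inner_commute algebra_simps)
  then show ?thesis by (simp add: w_def l_def)
qed

lemma rayleigh_maximizer_exists:
  fixes G :: "real^'n^'n"
  assumes S: "subspace S" "x \<in> S" "x \<noteq> 0"
  obtains v where "v \<in> S" "v \<bullet> v = 1" "\<And>y. y \<in> S \<Longrightarrow> y \<bullet> (G *v y) \<le> (v \<bullet> (G *v v)) * (y \<bullet> y)"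
proof -
  define K where "K = S \<inter> sphere 0 1"
  have "(1 / norm x) *\<^sub>R x \<in> K"
    using S by (auto simp: K_def subspace_scale)
  moreover have "compact K"
    unfolding K_def by (intro closed_Int_compact closed_subspace S(1) compact_sphere)
  moreover have "continuous_on K (\<lambda>y. y \<bullet> (G *v y))"
    by (intro continuous_intros linear_continuous_on matrix_vector_mul_linear)
      (auto intro!: linear_linear)
  ultimately obtain v where "v \<in> K" and vmax: "\<And>y. y \<in> K \<Longrightarrow> y \<bullet> (G *v y) \<le> v \<bullet> (G *v v)"
    using continuous_attains_sup by (metis empty_iff)
  moreover have "y \<bullet> (G *v y) \<le> (v \<bullet> (G *v v)) * (y \<bullet> y)" if "y \<in> S" for y
  proof (cases "y = 0")
    case False
    then have "(1 / norm y) *\<^sub>R y \<in> K"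
      using that S(1) by (auto simp: K_def subspace_scale)
    from vmax[OF this] show ?thesis
      using False by (simp add: matrix_vector_mult_scaleR dot_square_norm power2_eq_square
          divide_le_eq mult.commute)
  qed simp
  ultimately show thesis
    using that by (auto simp: K_def dot_square_norm)
qed

text \<open>The first eigenvector maximises the Rayleigh quotient on the unit sphere of \<open>S\<close>;
  its orthogonal complement in \<open>S\<close> is again invariant.\<close>

theorem symmetric_invariant_subspace_eigenbasis:
  fixes G :: "real^'n^'n"
  assumes sym: "transpose G = G" and "subspace S" "\<forall>x\<in>S. G *v x \<in> S"
  obtains B where "B \<subseteq> S" "orthonormal B" "span B = S"
    "\<And>b. b \<in> B \<Longrightarrow> G *v b = (b \<bullet> (G *v b)) *\<^sub>R b"
proof -
  have "\<exists>B. B \<subseteq> S \<and> orthonormal B \<and> span B = S \<and> (\<forall>b\<in>B. G *v b = (b \<bullet> (G *v b)) *\<^sub>R b)"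
    using assms(2,3)
  proof (induction "dim S" arbitrary: S rule: less_induct)
    case less
    note S = less.prems
    show ?case
    proof (cases "S \<subseteq> {0}")
      case True
      then have "S = {0}"
        using subspace_0[OF S(1)] by blast
      then show ?thesis
        by (intro exI[of _ "{}"]) (auto simp: orthonormal_def)
    next
      case False
      then obtain x where "x \<in> S" "x \<noteq> 0"
        by blast
      then obtain v where v: "v \<in> S" "v \<bullet> v = 1"
        and max: "\<And>y. y \<in> S \<Longrightarrow> y \<bullet> (G *v y) \<le> (v \<bullet> (G *v v)) * (y \<bullet> y)"
        using rayleigh_maximizer_exists[OF S(1)] by blast
      have eig: "G *v v = (v \<bullet> (G *v v)) *\<^sub>R v"
        by (rule rayleigh_maximizer_is_eigenvector[OF sym S v max])
      define S' where "S' = {y \<in> S. v \<bullet> y = 0}"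
      have sub': "subspace S'"
        using S(1) by (auto simp: S'_def subspace_def inner_add_right)
      have inv': "\<forall>y\<in>S'. G *v y \<in> S'"
        using S(2) eig inner_symmetric_matrix_vector[OF sym, of v]
        by (auto simp: S'_def) (metis inner_scaleR_left mult_zero_right)
      have "S' \<subset> S"
        using v by (force simp: S'_def)
      then have "dim S' < dim S"
        using S(1) sub' by (intro dim_psubset) (simp add: span_eq_iff[THEN iffD2])
      from less.hyps[OF this sub' inv'] obtain B' where
        B': "B' \<subseteq> S'" "orthonormal B'" "span B' = S'" "\<forall>b\<in>B'. G *v b = (b \<bullet> (G *v b)) *\<^sub>R b"
        by blast
      have orth: "orthonormal (insert v B')"
        using B'(1,2) v unfolding orthonormal_def pairwise_def orthogonal_def
        by (auto simp: S'_def norm_eq_1 inner_commute)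
      have "y \<in> span (insert v B')" if "y \<in> S" for y
      proof -
        have "y - (v \<bullet> y) *\<^sub>R v \<in> span B'"
          using that v S(1) by (simp add: B'(3) S'_def subspace_diff subspace_scale inner_diff_right)
        then have "y - (v \<bullet> y) *\<^sub>R v + (v \<bullet> y) *\<^sub>R v \<in> span (insert v B')"
          by (meson span_add span_base span_mono span_scale insertI1 subsetD subset_insertI)
        then show ?thesis
          by simp
      qed
      moreover have "span (insert v B') \<subseteq> S"
        using B'(1) v(1) S(1) by (intro span_minimal) (auto simp: S'_def)
      ultimately show ?thesis
        using orth B'(1,4) v(1) eig by (intro exI[of _ "insert v B'"]) (auto simp: S'_def)
    qed
  qed
  then show thesis
    using that by blast
qed

lemma symmetric_eigenbasis:
  fixes G :: "real^'n^'n"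
  assumes "transpose G = G"
  obtains U where "orthonormal U" "span U = UNIV"
    "\<And>u. u \<in> U \<Longrightarrow> G *v u = (u \<bullet> (G *v u)) *\<^sub>R u"
  using symmetric_invariant_subspace_eigenbasis[OF assms, of UNIV] by auto

lemma eigenvalues_eq_eigenbasis_image:
  fixes G :: "real^'n^'n"
  assumes sym: "transpose G = G" and U: "orthonormal U" "span U = UNIV"
    and eig: "\<And>u. u \<in> U \<Longrightarrow> G *v u = \<mu> u *\<^sub>R u"
  shows "{c. \<exists>v. v \<noteq> 0 \<and> G *v v = c *\<^sub>R v} = \<mu> ` U"
proof (intro set_eqI iffI)
  fix c assume "c \<in> {c. \<exists>v. v \<noteq> 0 \<and> G *v v = c *\<^sub>R v}"
  then obtain v where v: "v \<noteq> 0" "G *v v = c *\<^sub>R v"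
    by blast
  have "\<exists>u\<in>U. u \<bullet> v \<noteq> 0"
  proof (rule ccontr)
    assume "\<not> ?thesis"
    then have "v \<bullet> v = 0"
      using orthonormal_parseval[OF U(1), of v v] U(2) by simp
    with v(1) show False
      by simp
  qed
  then obtain u where "u \<in> U" "u \<bullet> v \<noteq> 0"
    by blast
  moreover have "c * (u \<bullet> v) = \<mu> u * (u \<bullet> v)"
    using inner_symmetric_matrix_vector[OF sym, of u v] v(2) eig[OF \<open>u \<in> U\<close>] by auto
  ultimately show "c \<in> \<mu> ` U"
    by auto
next
  fix c assume "c \<in> \<mu> ` U"
  then obtain u where "u \<in> U" "c = \<mu> u"
    by blast
  moreover from this have "u \<noteq> 0"
    using U(1) by (auto simp: orthonormal_def)
  ultimately show "c \<in> {c. \<exists>v. v \<noteq> 0 \<and> G *v v = c *\<^sub>R v}"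
    using eig by blast
qed

lemma symmetric_diagonal_form:
  fixes G :: "real^'n^'n"
  assumes sym: "transpose G = G"
  obtains U and \<mu> :: "real^'n \<Rightarrow> real"
  where "finite U" "U \<noteq> {}" "\<And>u. u \<in> U \<Longrightarrow> u \<bullet> u = 1" "\<And>u. u \<in> U \<Longrightarrow> G *v u = \<mu> u *\<^sub>R u"
    "min_eigenvalue G = Min (\<mu> ` U)"
    "\<And>x. x \<bullet> x = (\<Sum>u\<in>U. (u \<bullet> x)\<^sup>2)"
    "\<And>x. x \<bullet> (G *v x) = (\<Sum>u\<in>U. \<mu> u * (u \<bullet> x)\<^sup>2)"
    "\<And>x. (G *v x) \<bullet> (G *v x) = (\<Sum>u\<in>U. (\<mu> u)\<^sup>2 * (u \<bullet> x)\<^sup>2)"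
proof -
  obtain U where U: "orthonormal U" "span U = UNIV"
    and eig: "\<And>u. u \<in> U \<Longrightarrow> G *v u = (u \<bullet> (G *v u)) *\<^sub>R u"
    using symmetric_eigenbasis[OF sym] by blast
  define \<mu> where "\<mu> u = u \<bullet> (G *v u)" for u
  have eig': "G *v u = \<mu> u *\<^sub>R u" if "u \<in> U" for u
    using eig[OF that] by (simp add: \<mu>_def)
  have "U \<noteq> {}"
  proof
    assume "U = {}"
    then have "axis undefined 1 = (0::real^'n)"
      using U(2) by (metis UNIV_I singletonD span_empty)
    then show False
      by (simp add: axis_eq_0_iff)
  qed
  have coeff: "u \<bullet> (G *v x) = \<mu> u * (u \<bullet> x)" if "u \<in> U" for u x
    using inner_symmetric_matrix_vector[OF sym, of u x] eig'[OF that] by simp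
  have parseval: "x \<bullet> y = (\<Sum>u\<in>U. (u \<bullet> x) * (u \<bullet> y))" for x y
    using orthonormal_parseval[OF U(1), of x y] U(2) by simp
  have "min_eigenvalue G = Min (\<mu> ` U)"
    by (simp add: min_eigenvalue_def eigenvalues_eq_eigenbasis_image[OF sym U eig'])
  moreover have "x \<bullet> x = (\<Sum>u\<in>U. (u \<bullet> x)\<^sup>2)" for x
    using parseval[of x x] by (simp add: power2_eq_square)
  moreover have "x \<bullet> (G *v x) = (\<Sum>u\<in>U. \<mu> u * (u \<bullet> x)\<^sup>2)" for x
    using parseval[of x "G *v x"] by (simp add: coeff power2_eq_square mult_ac)
  moreover have "(G *v x) \<bullet> (G *v x) = (\<Sum>u\<in>U. (\<mu> u)\<^sup>2 * (u \<bullet> x)\<^sup>2)" for x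
    using parseval[of "G *v x" "G *v x"] by (simp add: coeff power2_eq_square mult_ac)
  moreover have "u \<bullet> u = 1" if "u \<in> U" for u
    using orthonormal_inner[OF U(1) that that] by simp
  ultimately show thesis
    using orthonormal_finite[OF U(1)] \<open>U \<noteq> {}\<close> eig' by (intro that[of U \<mu>])
qed

lemma symmetric_min_eigenvalue:
  fixes G :: "real^'n^'n"
  assumes "transpose G = G"
  shows "\<exists>u. u \<bullet> u = 1 \<and> G *v u = min_eigenvalue G *\<^sub>R u"
    and "min_eigenvalue G * (x \<bullet> x) \<le> x \<bullet> (G *v x)"
    and "0 \<le> min_eigenvalue G \<Longrightarrow> min_eigenvalue G * (x \<bullet> (G *v x)) \<le> (G *v x) \<bullet> (G *v x)"
proof -
  obtain U \<mu> where U: "finite U" "U \<noteq> {}" "\<And>u. u \<in> U \<Longrightarrow> u \<bullet> u = 1"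
    "\<And>u. u \<in> U \<Longrightarrow> G *v u = \<mu> u *\<^sub>R u" "min_eigenvalue G = Min (\<mu> ` U)"
    and norm2: "\<And>x. x \<bullet> x = (\<Sum>u\<in>U. (u \<bullet> x)\<^sup>2)"
    and rayleigh: "\<And>x. x \<bullet> (G *v x) = (\<Sum>u\<in>U. \<mu> u * (u \<bullet> x)\<^sup>2)"
    and image: "\<And>x. (G *v x) \<bullet> (G *v x) = (\<Sum>u\<in>U. (\<mu> u)\<^sup>2 * (u \<bullet> x)\<^sup>2)"
    using symmetric_diagonal_form[OF assms] by blast
  have min_le: "min_eigenvalue G \<le> \<mu> u" if "u \<in> U" for u
    using U(1,5) that by simp
  have "min_eigenvalue G \<in> \<mu> ` U"
    using U(1,2,5) by simp
  then obtain u where "u \<in> U" "min_eigenvalue G = \<mu> u"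
    by blast
  then show "\<exists>u. u \<bullet> u = 1 \<and> G *v u = min_eigenvalue G *\<^sub>R u"
    using U(3,4) by metis
  show "min_eigenvalue G * (x \<bullet> x) \<le> x \<bullet> (G *v x)"
    unfolding norm2 rayleigh sum_distrib_left by (intro sum_mono mult_right_mono min_le) auto
  assume "0 \<le> min_eigenvalue G"
  then have "min_eigenvalue G * \<mu> u \<le> (\<mu> u)\<^sup>2" if "u \<in> U" for u
    using min_le[OF that] by (simp add: power2_eq_square mult_right_mono)
  then show "min_eigenvalue G * (x \<bullet> (G *v x)) \<le> (G *v x) \<bullet> (G *v x)"
    unfolding rayleigh image sum_distrib_left mult.assoc[symmetric]
    by (intro sum_mono mult_right_mono) auto
qed

lemma gram_symmetric: "transpose (transpose X ** X) = transpose X ** (X::real^'r^'n)"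
  by (simp add: matrix_transpose_mul)

lemma gram_inner: "x \<bullet> ((transpose X ** X) *v y) = (X *v x) \<bullet> ((X::real^'r^'n) *v y)"
  using inner_transpose_matrix_vector[of "transpose X" x "X *v y"]
  by (simp add: matrix_vector_mul_assoc[symmetric])

lemma gram_eigenvector_inner:
  fixes X :: "real^'r^'n"
  assumes "(transpose X ** X) *v u = (u \<bullet> ((transpose X ** X) *v u)) *\<^sub>R u"
  shows "(X *v u) \<bullet> (X *v x) = ((X *v u) \<bullet> (X *v u)) * (u \<bullet> x)"
proof -
  have "(X *v u) \<bullet> (X *v x) = ((transpose X ** X) *v u) \<bullet> x"
    by (simp add: gram_inner inner_commute)
  also have "\<dots> = ((X *v u) \<bullet> (X *v u)) * (u \<bullet> x)"
    by (subst assms) (simp add: gram_inner)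
  finally show ?thesis .
qed

lemma gram_min_eigenvalue_nonneg: "0 \<le> min_eigenvalue (transpose X ** (X::real^'r^'n))"
proof -
  obtain u where "u \<bullet> u = 1" "(transpose X ** X) *v u = min_eigenvalue (transpose X ** X) *\<^sub>R u"
    using symmetric_min_eigenvalue(1)[OF gram_symmetric] by blast
  then have "min_eigenvalue (transpose X ** X) = (X *v u) \<bullet> (X *v u)"
    using gram_inner[of u X u] by simp
  then show ?thesis
    by simp
qed

lemma sigma_min_sq: "(sigma_min X)\<^sup>2 = min_eigenvalue (transpose X ** X)"
  by (simp add: sigma_min_def gram_min_eigenvalue_nonneg)

lemma gram_min_eigenvalue_pos_imp_inj:
  fixes X :: "real^'r^'n"
  assumes "0 < min_eigenvalue (transpose X ** X)"
  shows "inj ((*v) X)"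
  unfolding vec.inj_iff_eq_0
proof (intro allI impI)
  fix x assume "X *v x = 0"
  then have "min_eigenvalue (transpose X ** X) * (x \<bullet> x) \<le> 0"
    using symmetric_min_eigenvalue(2)[OF gram_symmetric, of X x] by (simp add: gram_inner)
  with assms show "x = 0"
    by (metis inner_gt_zero_iff mult_le_0_iff not_le)
qed

lemma gram_transpose_rayleigh_ge:
  fixes X :: "real^'r^'n"
  assumes "e \<in> range ((*v) X)"
  shows "min_eigenvalue (transpose X ** X) * (e \<bullet> e) \<le> e \<bullet> ((X ** transpose X) *v e)"
proof -
  define G where "G = transpose X ** X"
  obtain x where e: "e = X *v x"
    using assms by blast
  have "min_eigenvalue G * (e \<bullet> e) = min_eigenvalue G * (x \<bullet> (G *v x))"
    by (simp add: e G_def gram_inner)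
  also have "\<dots> \<le> (G *v x) \<bullet> (G *v x)"
    unfolding G_def by (rule symmetric_min_eigenvalue(3)[OF gram_symmetric gram_min_eigenvalue_nonneg])
  also have "\<dots> = e \<bullet> ((X ** transpose X) *v e)"
    using inner_transpose_matrix_vector[of X e "transpose X *v e"]
    by (simp add: e G_def matrix_vector_mul_assoc matrix_mul_assoc)
  finally show ?thesis
    by (simp add: G_def)
qed

section \<open>The Frobenius norm\<close>

lemma matrix_add_rdistrib: "((A::real^'n^'m) + B) ** C = A ** C + B ** C"
  by (vector matrix_matrix_mult_def sum.distrib distrib_right)

lemma matrix_diff_ldistrib: "(A::real^'n^'m) ** (B - C) = A ** B - A ** C"
  by (vector matrix_matrix_mult_def sum_subtractf right_diff_distrib)

lemma matrix_diff_rdistrib: "((A::real^'n^'m) - B) ** C = A ** C - B ** C"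
  by (vector matrix_matrix_mult_def sum_subtractf left_diff_distrib)

lemma transpose_diff: "transpose ((A::real^'n^'m) - B) = transpose A - transpose B"
  by (simp add: transpose_def vec_eq_iff)

lemma transpose_zero [simp]: "transpose 0 = (0::real^'n^'m)"
  by (simp add: transpose_def vec_eq_iff)

lemma frob_norm_eq_norm: "frob_norm A = norm A"
  by (simp add: frob_norm_def norm_vec_def L2_set_def real_norm_def sum_nonneg)

lemma norm_matrix_sq_rows: "(norm (A::real^'n^'m))\<^sup>2 = (\<Sum>i\<in>UNIV. (A $ i) \<bullet> (A $ i))"
  by (simp add: power2_norm_eq_inner inner_vec_def)

lemma inner_matrix_eq_trace: "A \<bullet> B = trace (A ** transpose (B::real^'n^'m))"
  by (simp add: inner_vec_def trace_def matrix_matrix_mult_def transpose_def)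

lemma inner_matrix_mult_left: "(A ** B) \<bullet> C = B \<bullet> (transpose A ** C)"
  for A :: "real^'n^'m" and B :: "real^'p^'n"
  by (metis inner_matrix_eq_trace matrix_mul_assoc matrix_transpose_mul transpose_transpose trace_mul_sym)

lemma inner_matrix_mult_right: "(A ** B) \<bullet> C = A \<bullet> (C ** transpose B)"
  for A :: "real^'n^'m" and B :: "real^'p^'n"
  by (simp add: inner_matrix_eq_trace matrix_mul_assoc matrix_transpose_mul)

lemma norm_transpose: "norm (transpose A) = norm (A::real^'n^'m)"
  by (metis inner_matrix_eq_trace norm_eq_sqrt_inner trace_mul_sym transpose_transpose)

lemma trace_mult_transpose: "trace (A ** transpose A) = (norm (A::real^'n^'m))\<^sup>2"
  by (simp add: inner_matrix_eq_trace power2_norm_eq_inner)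

lemma norm_mult_transpose_commute: "norm (A ** transpose A) = norm (transpose A ** (A::real^'n^'m))"
proof -
  have "(A ** transpose A) \<bullet> (A ** transpose A) = transpose A \<bullet> ((transpose A ** A) ** transpose A)"
    by (simp add: inner_matrix_mult_left matrix_mul_assoc)
  also have "\<dots> = (transpose A ** A) \<bullet> (transpose A ** A)"
    by (metis inner_commute inner_matrix_mult_right transpose_transpose)
  finally show ?thesis by (simp add: norm_eq_sqrt_inner)
qed

lemma norm_matrix_vector_sq: "(norm ((A::real^'n^'m) *v x))\<^sup>2 = (\<Sum>i\<in>UNIV. (A $ i \<bullet> x)\<^sup>2)"
  unfolding power2_norm_eq_inner by (simp add: inner_vec_def matrix_vector_mul_component power2_eq_square)

lemma matrix_bessel:
  fixes A :: "real^'n^'m"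
  assumes "orthonormal B"
  shows "(\<Sum>b\<in>B. (norm (A *v b))\<^sup>2) \<le> (norm A)\<^sup>2"
proof -
  have "(\<Sum>b\<in>B. (norm (A *v b))\<^sup>2) = (\<Sum>i\<in>UNIV. \<Sum>b\<in>B. (A $ i \<bullet> b)\<^sup>2)"
    unfolding norm_matrix_vector_sq by (rule sum.swap)
  also have "\<dots> \<le> (norm A)\<^sup>2"
    unfolding norm_matrix_sq_rows by (intro sum_mono orthonormal_bessel assms)
  finally show ?thesis .
qed

lemma matrix_parseval:
  fixes A :: "real^'n^'m"
  assumes "orthonormal B" "\<And>i. A $ i \<in> span B"
  shows "(\<Sum>b\<in>B. (norm (A *v b))\<^sup>2) = (norm A)\<^sup>2"
proof -
  have "(\<Sum>b\<in>B. (norm (A *v b))\<^sup>2) = (\<Sum>i\<in>UNIV. \<Sum>b\<in>B. (A $ i \<bullet> b)\<^sup>2)"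
    unfolding norm_matrix_vector_sq by (rule sum.swap)
  also have "\<dots> = (norm A)\<^sup>2"
  proof -
    have "A $ i \<bullet> A $ i = (\<Sum>b\<in>B. (A $ i \<bullet> b)\<^sup>2)" for i
      by (rule orthonormal_parseval_norm[OF assms(1,2)])
    then show ?thesis
      unfolding norm_matrix_sq_rows by simp
  qed
  finally show ?thesis .
qed

lemma matrix_diagonal_bessel:
  fixes A :: "real^'n^'n"
  assumes "orthonormal B"
  shows "(\<Sum>b\<in>B. (b \<bullet> (A *v b))\<^sup>2) \<le> (norm A)\<^sup>2"
proof -
  have "(b \<bullet> (A *v b))\<^sup>2 \<le> (norm (A *v b))\<^sup>2" if "b \<in> B" for b
    using Cauchy_Schwarz_ineq[of b "A *v b"] orthonormal_inner[OF assms that that]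
    by (simp add: power2_norm_eq_inner)
  then have "(\<Sum>b\<in>B. (b \<bullet> (A *v b))\<^sup>2) \<le> (\<Sum>b\<in>B. (norm (A *v b))\<^sup>2)"
    by (rule sum_mono)
  also have "\<dots> \<le> (norm A)\<^sup>2"
    by (rule matrix_bessel[OF assms])
  finally show ?thesis .
qed

lemma norm_sq_split_projection_left:
  fixes P :: "real^'n^'n" and T :: "real^'p^'n"
  assumes "transpose P = P" "P ** P = P"
  shows "(norm T)\<^sup>2 = (norm (P ** T))\<^sup>2 + (norm ((mat 1 - P) ** T))\<^sup>2"
proof -
  have "(P ** T) \<bullet> ((mat 1 - P) ** T) = T \<bullet> ((P ** (mat 1 - P)) ** T)"
    by (simp add: inner_matrix_mult_left assms(1) matrix_mul_assoc)
  also have "\<dots> = 0"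
    by (simp add: matrix_diff_ldistrib assms(2))
  finally have "(P ** T) \<bullet> ((mat 1 - P) ** T) = 0" .
  then have "(norm (P ** T + (mat 1 - P) ** T))\<^sup>2 = (norm (P ** T))\<^sup>2 + (norm ((mat 1 - P) ** T))\<^sup>2"
    by (intro norm_add_Pythagorean) (simp add: orthogonal_def)
  moreover have "P ** T + (mat 1 - P) ** T = T"
    unfolding matrix_add_rdistrib[symmetric] by simp
  ultimately show ?thesis
    by simp
qed

lemma norm_sq_split_projection_right:
  fixes P :: "real^'n^'n" and T :: "real^'n^'p"
  assumes "transpose P = P" "P ** P = P"
  shows "(norm T)\<^sup>2 = (norm (T ** P))\<^sup>2 + (norm (T ** (mat 1 - P)))\<^sup>2"
proof -
  have "transpose (T ** P) = P ** transpose T" "transpose (T ** (mat 1 - P)) = (mat 1 - P) ** transpose T"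
    by (simp_all add: matrix_transpose_mul transpose_diff assms(1))
  then show ?thesis
    using norm_sq_split_projection_left[OF assms, of "transpose T"]
      norm_transpose[of "T ** P"] norm_transpose[of "T ** (mat 1 - P)"] norm_transpose[of T]
    by simp
qed

lemma row_matrix_mult_in_row_space: "(A ** Z) $ i \<in> range ((*v) (transpose Z))"
  for A :: "real^'n^'m" and Z :: "real^'p^'n"
proof
  show "(A ** Z) $ i = transpose Z *v A $ i"
    by (simp add: vec_eq_iff matrix_matrix_mult_def matrix_vector_mult_def transpose_def mult.commute)
qed simp

lemma sum_norm_sq_sq_le:
  fixes M :: "real^'m^'n"
  assumes "orthonormal B"
  shows "(\<Sum>b\<in>B. ((norm (M *v b))\<^sup>2)\<^sup>2) \<le> (norm (M ** transpose M))\<^sup>2"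
proof -
  have "(norm (M *v b))\<^sup>2 = b \<bullet> ((transpose M ** M) *v b)" for b
    by (simp add: gram_inner power2_norm_eq_inner)
  then show ?thesis
    using matrix_diagonal_bessel[OF assms, of "transpose M ** M"]
    by (simp add: norm_mult_transpose_commute)
qed

lemma norm_sq_sq_le_dim_rows:
  fixes M :: "real^'m^'n"
  assumes "subspace S" "\<And>i. M $ i \<in> S"
  shows "((norm M)\<^sup>2)\<^sup>2 \<le> real (dim S) * (norm (M ** transpose M))\<^sup>2"
proof -
  obtain B where B: "B \<subseteq> S" "pairwise orthogonal B" "\<And>x. x \<in> B \<Longrightarrow> norm x = 1"
    "independent B" "card B = dim S" "span B = S"
    using orthonormal_basis_subspace[OF assms(1)] by metis
  then have "orthonormal B"
    by (simp add: orthonormal_def)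
  have "(norm M)\<^sup>2 = (\<Sum>b\<in>B. 1 * (norm (M *v b))\<^sup>2)"
    using matrix_parseval[OF \<open>orthonormal B\<close>, of M] assms(2) B(6) by simp
  then have "((norm M)\<^sup>2)\<^sup>2 = (\<Sum>b\<in>B. 1 * (norm (M *v b))\<^sup>2)\<^sup>2"
    by (simp only:)
  also have "\<dots> \<le> (\<Sum>b\<in>B. 1\<^sup>2) * (\<Sum>b\<in>B. ((norm (M *v b))\<^sup>2)\<^sup>2)"
    by (rule Cauchy_Schwarz_ineq_sum)
  also have "\<dots> \<le> real (dim S) * (norm (M ** transpose M))\<^sup>2"
    using sum_norm_sq_sq_le[OF \<open>orthonormal B\<close>, of M] B(5) by (simp add: mult_left_mono)
  finally show ?thesis .
qed

lemma norm_sq_sq_le_rank: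
  fixes Z :: "real^'r^'n" and A :: "real^'n^'n"
  shows "((norm (A ** Z))\<^sup>2)\<^sup>2 \<le> real (rank Z) * (norm ((A ** Z) ** transpose (A ** Z)))\<^sup>2"
proof -
  have "subspace (range ((*v) (transpose Z)))"
    by (simp add: subspace_UNIV linear_subspace_image)
  from norm_sq_sq_le_dim_rows[OF this row_matrix_mult_in_row_space] show ?thesis
    by (simp add: rank_dim_range[symmetric] rank_transpose)
qed

lemma gram_blocks_bessel:
  fixes A :: "real^'n^'n" and Z1 :: "real^'m^'n" and Zp :: "real^'m^'k"
  assumes "orthonormal E"
  shows "(\<Sum>e\<in>E. (e \<bullet> (A *v e) - (norm (transpose Z1 *v e))\<^sup>2)\<^sup>2
      + 2 * (norm (Zp *v (transpose Z1 *v e)))\<^sup>2)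
    \<le> (norm (A - Z1 ** transpose Z1))\<^sup>2 + 2 * (norm (Z1 ** transpose Zp))\<^sup>2"
proof -
  have "e \<bullet> ((A - Z1 ** transpose Z1) *v e) = e \<bullet> (A *v e) - (norm (transpose Z1 *v e))\<^sup>2" for e
    using inner_transpose_matrix_vector[of Z1 e "transpose Z1 *v e"]
    by (simp add: matrix_vector_mult_diff_rdistrib inner_diff_right power2_norm_eq_inner
        matrix_vector_mul_assoc)
  moreover have "Zp *v (transpose Z1 *v e) = transpose (Z1 ** transpose Zp) *v e" for e
    by (simp add: matrix_transpose_mul matrix_vector_mul_assoc)
  ultimately show ?thesis
    using matrix_diagonal_bessel[OF assms, of "A - Z1 ** transpose Z1"]
      matrix_bessel[OF assms, of "transpose (Z1 ** transpose Zp)"]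
    by (simp add: sum.distrib sum_distrib_left[symmetric] norm_transpose)
qed

lemma parseval_quadratic_lower_bound:
  fixes M :: "real^'m^'n"
  assumes "orthonormal B" "\<And>i. M $ i \<in> span B"
  shows "2 * c * s * (norm M)\<^sup>2 - c\<^sup>2 * (norm (M ** transpose M))\<^sup>2
    \<le> (\<Sum>b\<in>B. 2 * c * s * (norm (M *v b))\<^sup>2 - c\<^sup>2 * ((norm (M *v b))\<^sup>2)\<^sup>2)"
  using matrix_parseval[OF assms] sum_norm_sq_sq_le[OF assms(1), of M]
  by (simp add: sum_subtractf sum_distrib_left[symmetric] mult_left_mono)

section \<open>The Moore--Penrose pseudoinverse\<close>

definition moore_penrose :: "real^'r^'n \<Rightarrow> real^'n^'r \<Rightarrow> bool" where
  "moore_penrose X B \<longleftrightarrow> X ** B ** X = X \<and> B ** X ** B = B \<and>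
     transpose (X ** B) = X ** B \<and> transpose (B ** X) = B ** X"

lemma moore_penrose_unique:
  assumes "moore_penrose X B" "moore_penrose X C"
  shows "B = C"
proof -
  from assms have XBX: "X ** B ** X = X" and BXB: "B ** X ** B = B"
    and XB: "transpose (X ** B) = X ** B" and BX: "transpose (B ** X) = B ** X"
    and XCX: "X ** C ** X = X" and CXC: "C ** X ** C = C"
    and XC: "transpose (X ** C) = X ** C" and CX: "transpose (C ** X) = C ** X"
    by (auto simp: moore_penrose_def)
  have "B = B ** transpose (X ** B)"
    using BXB XB by (simp add: matrix_mul_assoc)
  also have "\<dots> = B ** transpose B ** transpose (X ** C ** X)"
    using XCX by (simp add: matrix_transpose_mul matrix_mul_assoc)
  also have "\<dots> = B ** transpose (X ** B) ** transpose (X ** C)"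
    by (simp add: matrix_transpose_mul matrix_mul_assoc)
  also have "\<dots> = B ** X ** C"
    using XB XC BXB by (simp add: matrix_mul_assoc)
  finally have B: "B = B ** X ** C" .
  have "C = transpose (C ** X) ** C"
    using CXC CX by simp
  also have "\<dots> = transpose (X ** B ** X) ** transpose C ** C"
    using XBX by (simp add: matrix_transpose_mul matrix_mul_assoc)
  also have "\<dots> = transpose (B ** X) ** transpose (C ** X) ** C"
    by (simp add: matrix_transpose_mul matrix_mul_assoc)
  also have "\<dots> = B ** X ** (C ** X ** C)"
    using BX CX by (simp add: matrix_mul_assoc)
  also have "\<dots> = B ** X ** C"
    using CXC by simp
  finally show ?thesis
    using B by simp
qed

lemma outer_product_sum_mult_vector:
  "(\<chi> i j. \<Sum>u\<in>U. c u * u $ i * w u $ j) *v y = (\<Sum>u\<in>U. (c u * (w u \<bullet> y)) *\<^sub>R u)"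
  for w :: "real^'m \<Rightarrow> real^'n" and y :: "real^'n"
  unfolding vec_eq_iff
  by (simp add: matrix_vector_mult_def inner_vec_def sum_distrib_left sum_distrib_right
      sum.swap[of _ U] mult_ac)

lemma moore_penrose_exists: "\<exists>B. moore_penrose (X::real^'r^'n) B"
proof -
  obtain U where U: "orthonormal U" "span U = UNIV"
    and eig: "\<And>u. u \<in> U \<Longrightarrow> (transpose X ** X) *v u = (u \<bullet> ((transpose X ** X) *v u)) *\<^sub>R u"
    using symmetric_eigenbasis[OF gram_symmetric] by blast
  define \<mu> where "\<mu> u = (X *v u) \<bullet> (X *v u)" for u
  have XuX: "(X *v u) \<bullet> (X *v x) = \<mu> u * (u \<bullet> x)" if "u \<in> U" for u x
    unfolding \<mu>_def by (rule gram_eigenvector_inner[OF eig[OF that]])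
  have expand: "(\<Sum>u\<in>U. (u \<bullet> x) *\<^sub>R u) = x" for x
    using orthonormal_expand[OF U(1)] U(2) by simp
  \<comment> \<open>Since \<open>inverse 0 = 0\<close>, the kernel directions of \<open>X\<close> drop out of \<open>B\<close>.\<close>
  define B :: "real^'n^'r" where "B = (\<chi> i j. \<Sum>u\<in>U. inverse (\<mu> u) * u $ i * (X *v u) $ j)"
  have Bv: "B *v y = (\<Sum>u\<in>U. (inverse (\<mu> u) * ((X *v u) \<bullet> y)) *\<^sub>R u)" for y
    unfolding B_def by (rule outer_product_sum_mult_vector)
  have BX: "B *v (X *v x) = (\<Sum>u\<in>U. (if \<mu> u = 0 then 0 else u \<bullet> x) *\<^sub>R u)" for x
    unfolding Bv by (rule sum.cong) (auto simp: XuX)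
  have BXsym: "((B ** X) *v x) \<bullet> y = (\<Sum>u\<in>U. if \<mu> u = 0 then 0 else (u \<bullet> x) * (u \<bullet> y))" for x y
    unfolding matrix_vector_mul_assoc[symmetric] BX inner_sum_left by (rule sum.cong) auto
  have XBsym: "((X ** B) *v x) \<bullet> y = (\<Sum>u\<in>U. inverse (\<mu> u) * ((X *v u) \<bullet> x) * ((X *v u) \<bullet> y))"
    for x y
  proof -
    have XT: "(X *v a) \<bullet> b = a \<bullet> (transpose X *v b)" for a b
      using inner_transpose_matrix_vector[of "transpose X" a b] by simp
    show ?thesis
      by (simp add: matrix_vector_mul_assoc[symmetric] XT Bv inner_sum_left)
  qed
  have XBX: "X *v (B *v (X *v x)) = X *v x" for x
  proof -
    have "X *v u = 0" if "\<mu> u = 0" for u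
      using that by (simp add: \<mu>_def)
    then have "X *v (B *v (X *v x)) = (\<Sum>u\<in>U. (u \<bullet> x) *\<^sub>R (X *v u))"
      by (auto simp: BX vec.sum matrix_vector_mult_scaleR intro: sum.cong)
    also have "\<dots> = X *v x"
      by (subst (2) expand[symmetric]) (simp add: vec.sum matrix_vector_mult_scaleR)
    finally show ?thesis .
  qed
  have BXB: "B *v (X *v (B *v y)) = B *v y" for y
  proof -
    have "u \<bullet> (B *v y) = inverse (\<mu> u) * ((X *v u) \<bullet> y)" if "u \<in> U" for u
      unfolding Bv by (rule orthonormal_coeff[OF U(1) that])
    then have "B *v (X *v (B *v y)) = (\<Sum>u\<in>U. (inverse (\<mu> u) * ((X *v u) \<bullet> y)) *\<^sub>R u)"
      unfolding BX by (intro sum.cong) auto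
    then show ?thesis by (simp add: Bv)
  qed
  have "transpose (X ** B) = X ** B" "transpose (B ** X) = B ** X"
    by (rule symmetric_matrix_if_inner, subst inner_commute[of x],
        simp add: XBsym BXsym mult_ac cong: if_cong)+
  moreover have "X ** B ** X = X" "B ** X ** B = B"
    by (simp_all add: matrix_eq matrix_vector_mul_assoc[symmetric] XBX BXB)
  ultimately show ?thesis
    unfolding moore_penrose_def by blast
qed

lemma pinv_moore_penrose: "moore_penrose X (pinv X)"
proof -
  have "\<exists>!B. moore_penrose X B"
    using moore_penrose_exists moore_penrose_unique by blast
  then show ?thesis
    unfolding pinv_def moore_penrose_def[symmetric] by (rule theI')
qed

lemma pinv_projection:
  fixes X :: "real^'r^'n"
  defines "P \<equiv> X ** pinv X"
  shows "transpose P = P" "P ** X = X" "P ** P = P" "P *v y \<in> range ((*v) X)"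
proof -
  show "transpose P = P" "P ** X = X"
    using pinv_moore_penrose[of X] by (simp_all add: moore_penrose_def P_def)
  then show "P ** P = P"
    by (metis P_def matrix_mul_assoc)
  show "P *v y \<in> range ((*v) X)"
    by (simp add: P_def matrix_vector_mul_assoc[symmetric])
qed

section \<open>The main inequality\<close>

lemma norm_sq_gram_difference_split:
  fixes X Z :: "real^'r^'n" and P :: "real^'n^'n"
  assumes P: "transpose P = P" "P ** P = P" "P ** X = X"
  defines "Z1 \<equiv> P ** Z" and "Zp \<equiv> (mat 1 - P) ** Z"
  shows "(norm (X ** transpose X - Z ** transpose Z))\<^sup>2 =
    (norm (X ** transpose X - Z1 ** transpose Z1))\<^sup>2 + 2 * (norm (Z1 ** transpose Zp))\<^sup>2
      + (norm (Zp ** transpose Zp))\<^sup>2"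
proof -
  define Q where "Q = mat 1 - P"
  define Y where "Y = X ** transpose X - Z ** transpose Z"
  have "transpose Q = Q"
    using P(1) by (simp add: Q_def transpose_diff)
  have QX: "Q ** X = 0"
    using P(3) by (simp add: Q_def matrix_diff_rdistrib)
  have sandwich: "M ** Y ** N = (M ** X) ** transpose (N ** X) - (M ** Z) ** transpose (N ** Z)"
    if "transpose N = N" for M N :: "real^'n^'n"
    using that by (simp add: Y_def matrix_diff_ldistrib matrix_diff_rdistrib matrix_transpose_mul
        matrix_mul_assoc)
  note split_left = norm_sq_split_projection_left[OF P(1,2), folded Q_def]
  note split_right = norm_sq_split_projection_right[OF P(1,2), folded Q_def]
  have "(norm Y)\<^sup>2 = (norm (P ** Y ** P))\<^sup>2 + (norm (P ** Y ** Q))\<^sup>2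
      + ((norm (Q ** Y ** P))\<^sup>2 + (norm (Q ** Y ** Q))\<^sup>2)"
    unfolding split_left[of Y] split_right[of "P ** Y"] split_right[of "Q ** Y"] ..
  moreover have "P ** Y ** P = X ** transpose X - Z1 ** transpose Z1"
    using sandwich[OF P(1)] by (simp add: P(3) Z1_def)
  moreover have "P ** Y ** Q = - (Z1 ** transpose Zp)"
    using sandwich[OF \<open>transpose Q = Q\<close>] by (simp add: P(3) QX Z1_def Zp_def Q_def[symmetric])
  moreover have "Q ** Y ** P = - transpose (Z1 ** transpose Zp)"
    using sandwich[OF P(1)] by (simp add: P(3) QX Z1_def Zp_def Q_def[symmetric] matrix_transpose_mul)
  moreover have "Q ** Y ** Q = - (Zp ** transpose Zp)"
    using sandwich[OF \<open>transpose Q = Q\<close>] by (simp add: QX Zp_def Q_def[symmetric])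
  ultimately show ?thesis
    by (simp add: Y_def norm_transpose)
qed

lemma sum_bound_partial_matching:
  fixes g :: "'a \<Rightarrow> real" and h :: "'b \<Rightarrow> real"
  assumes fin: "finite A" "finite B" and v: "A' \<subseteq> A" "inj_on v A'" "v ` A' \<subseteq> B"
    and matched: "\<And>a. a \<in> A' \<Longrightarrow> h (v a) \<le> g a"
    and unmatched: "\<And>a. a \<in> A - A' \<Longrightarrow> m \<le> g a" "\<And>b. b \<in> B - v ` A' \<Longrightarrow> h b \<le> m"
  shows "sum h B + (real (card A) - real (card B)) * m \<le> sum g A"
proof -
  have finA': "finite A'"
    using fin(1) v(1) finite_subset by blast
  have cards: "card (A - A') = card A - card A'" "card (B - v ` A') = card B - card A'"
    "card A' \<le> card A" "card A' \<le> card B"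
    using fin v finA' card_image[OF v(2)] by (auto simp: card_Diff_subset card_mono intro: card_inj_on_le)
  have "sum h B = sum h (v ` A') + sum h (B - v ` A')"
    using fin(2) v(3) by (metis add.commute sum.subset_diff)
  also have "sum h (v ` A') \<le> sum g A'"
    using matched by (simp add: sum.reindex[OF v(2)] sum_mono)
  also have "sum h (B - v ` A') \<le> real (card B - card A') * m"
    using sum_bounded_above[of "B - v ` A'" h m] unmatched(2) cards(2) by simp
  finally have "sum h B + (real (card A) - real (card B)) * m \<le> sum g A' + real (card (A - A')) * m"
    using cards by (simp add: of_nat_diff algebra_simps)
  also have "real (card (A - A')) * m \<le> sum g (A - A')"
    using sum_bounded_below[of "A - A'" m g] unmatched(1) by simp
  also have "sum g A' + sum g (A - A') = sum g A"
    using fin(1) v(1) by (metis sum.subset_diff add.commute)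
  finally show ?thesis
    by simp
qed

lemma orthonormal_normalized_transpose_images:
  fixes M :: "real^'m^'n"
  assumes E: "orthonormal E"
    and eig: "\<And>e. e \<in> E \<Longrightarrow> (M ** transpose M) *v e = (e \<bullet> ((M ** transpose M) *v e)) *\<^sub>R e"
  defines "E' \<equiv> {e \<in> E. transpose M *v e \<noteq> 0}"
    and "v \<equiv> \<lambda>e. (transpose M *v e) /\<^sub>R norm (transpose M *v e)"
  shows "orthonormal (v ` E')" "inj_on v E'"
proof -
  have orth: "v e \<bullet> v f = 0" if "e \<in> E" "f \<in> E" "e \<noteq> f" for e f
  proof -
    have "(transpose M *v e) \<bullet> (transpose M *v f) = e \<bullet> ((M ** transpose M) *v f)"
      by (simp add: inner_transpose_matrix_vector matrix_vector_mul_assoc)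
    also have "\<dots> = 0"
      using orthonormal_inner[OF E that(1,2)] that(3) by (subst eig[OF that(2)]) simp
    finally show ?thesis
      by (simp add: v_def)
  qed
  have unit: "v e \<bullet> v e = 1" if "e \<in> E'" for e
    using that by (simp add: v_def E'_def dot_square_norm)
  show "inj_on v E'"
    using orth unit by (force simp: inj_on_def E'_def)
  then show "orthonormal (v ` E')"
    using orth unit unfolding orthonormal_def pairwise_def orthogonal_def
    by (auto simp: E'_def norm_eq_1)
qed

lemma matched_pair_bound:
  fixes a w s d c :: real
  assumes "s \<le> a" "0 \<le> s" "0 \<le> w" "0 \<le> d" "0 \<le> c" "c \<le> 1"
  shows "2 * c * s * d - c\<^sup>2 * d\<^sup>2 \<le> (a - w)\<^sup>2 + 2 * w * d"
proof -
  have "(a - w)\<^sup>2 + 2 * w * d - (2 * c * s * d - c\<^sup>2 * d\<^sup>2)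
      = (a - w - c * d)\<^sup>2 + 2 * c * d * (a - s) + 2 * w * d * (1 - c)"
    by (simp add: power2_eq_square algebra_simps)
  moreover have "0 \<le> 2 * c * d * (a - s)" "0 \<le> 2 * w * d * (1 - c)"
    using assms by simp_all
  ultimately show ?thesis
    by (smt (verit) zero_le_power2)
qed

lemma normalized_matched_bound:
  fixes M :: "real^'m^'k" and y :: "real^'m"
  assumes "y \<noteq> 0" "s \<le> a" "0 \<le> s" "0 \<le> c" "c \<le> 1"
  defines "d \<equiv> (norm (M *v (y /\<^sub>R norm y)))\<^sup>2"
  shows "2 * c * s * d - c\<^sup>2 * d\<^sup>2 \<le> (a - (norm y)\<^sup>2)\<^sup>2 + 2 * (norm (M *v y))\<^sup>2"
proof -
  have "(norm y)\<^sup>2 * d = (norm (M *v y))\<^sup>2"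
    using assms(1) by (simp add: d_def matrix_vector_mult_scaleR power_mult_distrib power_inverse)
  moreover have "2 * c * s * d - c\<^sup>2 * d\<^sup>2 \<le> (a - (norm y)\<^sup>2)\<^sup>2 + 2 * (norm y)\<^sup>2 * d"
    using assms(2-5) by (intro matched_pair_bound) (auto simp: d_def)
  ultimately show ?thesis
    by (simp add: mult.assoc)
qed

lemma gram_column_space_eigenbasis:
  fixes X :: "real^'r^'n" and W :: "real^'n^'n"
  assumes "0 < min_eigenvalue (transpose X ** X)"
    and "transpose W = W" "\<And>y. W *v y \<in> range ((*v) X)"
  obtains E where "orthonormal E" "card E = CARD('r)"
    "\<And>e. e \<in> E \<Longrightarrow> W *v e = (e \<bullet> (W *v e)) *\<^sub>R e"
    "\<And>e. e \<in> E \<Longrightarrow> min_eigenvalue (transpose X ** X) \<le> e \<bullet> ((X ** transpose X) *v e)"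
proof -
  have "subspace (range ((*v) X))"
    by (simp add: subspace_UNIV linear_subspace_image)
  then obtain E where E: "E \<subseteq> range ((*v) X)" "orthonormal E" "span E = range ((*v) X)"
    and "\<And>e. e \<in> E \<Longrightarrow> W *v e = (e \<bullet> (W *v e)) *\<^sub>R e"
    using symmetric_invariant_subspace_eigenbasis[OF assms(2)] assms(3) by blast
  moreover have "card E = dim (range ((*v) X))"
    using E by (intro basis_card_eq_dim orthonormal_independent) auto
  moreover have "min_eigenvalue (transpose X ** X) \<le> e \<bullet> ((X ** transpose X) *v e)" if "e \<in> E" for e
    using gram_transpose_rayleigh_ge[of e X] E(1) that orthonormal_inner[OF E(2) that that] by auto
  ultimately show thesis
    using that gram_min_eigenvalue_pos_imp_inj[OF assms(1)]
    by (simp add: rank_dim_range[symmetric] full_rank_injective)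
qed

lemma transpose_eigenvectors_row_basis:
  fixes M Z :: "real^'r^'n"
  assumes E: "orthonormal E"
    and eig: "\<And>e. e \<in> E \<Longrightarrow> (M ** transpose M) *v e = (e \<bullet> ((M ** transpose M) *v e)) *\<^sub>R e"
    and row: "\<And>e. transpose M *v e \<in> range ((*v) (transpose Z))"
  defines "E' \<equiv> {e \<in> E. transpose M *v e \<noteq> 0}"
    and "v \<equiv> \<lambda>e. (transpose M *v e) /\<^sub>R norm (transpose M *v e)"
  obtains B where "inj_on v E'" "v ` E' \<subseteq> B" "orthonormal B"
    "span B = range ((*v) (transpose Z))" "card B = rank Z"
proof -
  have R: "subspace (range ((*v) (transpose Z)))"
    by (simp add: subspace_UNIV linear_subspace_image)
  have V: "orthonormal (v ` E')" "inj_on v E'"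
    using orthonormal_normalized_transpose_images[OF E eig] by (simp_all add: E'_def v_def)
  moreover have "v ` E' \<subseteq> range ((*v) (transpose Z))"
    using row R by (auto simp: v_def intro: subspace_scale)
  ultimately obtain B where B: "v ` E' \<subseteq> B" "B \<subseteq> range ((*v) (transpose Z))" "orthonormal B"
    "span B = range ((*v) (transpose Z))"
    using orthonormal_extend[OF _ _ R] by metis
  moreover have "card B = dim (range ((*v) (transpose Z)))"
    using B by (intro basis_card_eq_dim orthonormal_independent) auto
  ultimately show thesis
    using that V(2) by (simp add: rank_dim_range[symmetric] rank_transpose)
qed

lemma gram_difference_lower_bound:
  fixes X Z :: "real^'r^'n"
  defines "P \<equiv> X ** pinv X" and "s \<equiv> min_eigenvalue (transpose X ** X)"
  defines "Z1 \<equiv> P ** Z" and "Zp \<equiv> (mat 1 - P) ** Z"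
  assumes s: "0 < s" and c: "0 \<le> c" "c \<le> 1"
  shows "(real CARD('r) - real (rank Z)) * s\<^sup>2 + 2 * c * s * (norm Zp)\<^sup>2
      - c\<^sup>2 * (norm (Zp ** transpose Zp))\<^sup>2
    \<le> (norm (X ** transpose X - Z1 ** transpose Z1))\<^sup>2 + 2 * (norm (Z1 ** transpose Zp))\<^sup>2"
proof -
  define A where "A = X ** transpose X"
  have W_sym: "transpose (Z1 ** transpose Z1) = Z1 ** transpose Z1"
    by (simp add: matrix_transpose_mul)
  have W_range: "(Z1 ** transpose Z1) *v y \<in> range ((*v) X)" for y
    using pinv_projection(4)[of X] by (simp add: Z1_def P_def matrix_vector_mul_assoc[symmetric])
  obtain E where E: "orthonormal E" "card E = CARD('r)"
    and eig: "\<And>e. e \<in> E \<Longrightarrow> (Z1 ** transpose Z1) *v e = (e \<bullet> ((Z1 ** transpose Z1) *v e)) *\<^sub>R e"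
    and "\<And>e. e \<in> E \<Longrightarrow> min_eigenvalue (transpose X ** X) \<le> e \<bullet> ((X ** transpose X) *v e)"
    using gram_column_space_eigenbasis[OF s[unfolded s_def] W_sym W_range] by blast
  then have a_ge: "s \<le> e \<bullet> (A *v e)" if "e \<in> E" for e
    using that by (simp add: s_def A_def)
  define E' where "E' = {e \<in> E. transpose Z1 *v e \<noteq> 0}"
  define v where "v = (\<lambda>e. (transpose Z1 *v e) /\<^sub>R norm (transpose Z1 *v e))"
  have "transpose Z1 *v e \<in> range ((*v) (transpose Z))" for e
    by (simp add: Z1_def matrix_transpose_mul matrix_vector_mul_assoc[symmetric])
  from transpose_eigenvectors_row_basis[OF E(1) eig this, folded E'_def v_def]
  obtain B where B: "inj_on v E'" "v ` E' \<subseteq> B" "orthonormal B"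
    "span B = range ((*v) (transpose Z))" "card B = rank Z"
    by blast
  define d where "d b = (norm (Zp *v b))\<^sup>2" for b
  define g where "g e = (e \<bullet> (A *v e) - (norm (transpose Z1 *v e))\<^sup>2)\<^sup>2
    + 2 * (norm (Zp *v (transpose Z1 *v e)))\<^sup>2" for e
  have "2 * c * s * (norm Zp)\<^sup>2 - c\<^sup>2 * (norm (Zp ** transpose Zp))\<^sup>2
      \<le> (\<Sum>b\<in>B. 2 * c * s * d b - c\<^sup>2 * (d b)\<^sup>2)"
    unfolding d_def using row_matrix_mult_in_row_space[of "mat 1 - P" Z]
    by (intro parseval_quadratic_lower_bound B(3)) (simp add: B(4) Zp_def)
  \<comment> \<open>Each \<open>e \<in> E'\<close> is matched with the unit vector \<open>v e \<in> B\<close>; the eigenvectors outside \<open>E'\<close>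
    contribute at least \<open>s\<^sup>2\<close> each, the vectors of \<open>B\<close> outside \<open>v ` E'\<close> at most \<open>s\<^sup>2\<close> each.\<close>
  also have "\<dots> + (real (card E) - real (card B)) * s\<^sup>2 \<le> sum g E"
  proof (rule sum_bound_partial_matching)
    show "finite E" "finite B"
      using E(1) B(3) by (simp_all add: orthonormal_finite)
    show "E' \<subseteq> E" "inj_on v E'" "v ` E' \<subseteq> B"
      using B(1,2) by (auto simp: E'_def)
    show "2 * c * s * d (v e) - c\<^sup>2 * (d (v e))\<^sup>2 \<le> g e" if "e \<in> E'" for e
      using normalized_matched_bound[of "transpose Z1 *v e" s "e \<bullet> (A *v e)" c Zp] that a_ge s c
      by (simp add: E'_def g_def d_def v_def less_imp_le)
    show "s\<^sup>2 \<le> g e" if "e \<in> E - E'" for e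
    proof -
      have "s\<^sup>2 \<le> (e \<bullet> (A *v e))\<^sup>2"
        using a_ge[of e] that s by (intro power_mono) auto
      then show ?thesis
        using that by (simp add: g_def E'_def)
    qed
    show "2 * c * s * d b - c\<^sup>2 * (d b)\<^sup>2 \<le> s\<^sup>2" for b
      using zero_le_power2[of "s - c * d b"] by (simp add: power2_eq_square algebra_simps)
  qed
  also have "sum g E \<le> (norm (A - Z1 ** transpose Z1))\<^sup>2 + 2 * (norm (Z1 ** transpose Zp))\<^sup>2"
    unfolding g_def by (rule gram_blocks_bessel[OF E(1)])
  finally show ?thesis
    using E(2) B(5) by (simp add: A_def algebra_simps)
qed

lemma gram_difference_key_inequality:
  fixes X Z :: "real^'r^'n"
  defines "Zp \<equiv> (mat 1 - X ** pinv X) ** Z" and "s \<equiv> (sigma_min X)\<^sup>2"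
  assumes "0 \<le> c" "c \<le> 1"
  shows "(real CARD('r) - real (rank Z)) * s\<^sup>2 + 2 * c * s * (norm Zp)\<^sup>2
      - c\<^sup>2 * (norm (Zp ** transpose Zp))\<^sup>2
    \<le> (norm (X ** transpose X - Z ** transpose Z))\<^sup>2 - (norm (Zp ** transpose Zp))\<^sup>2"
proof -
  define P where "P = X ** pinv X"
  have split: "(norm (X ** transpose X - Z ** transpose Z))\<^sup>2 - (norm (Zp ** transpose Zp))\<^sup>2 =
      (norm (X ** transpose X - (P ** Z) ** transpose (P ** Z)))\<^sup>2
        + 2 * (norm ((P ** Z) ** transpose Zp))\<^sup>2"
    using norm_sq_gram_difference_split[OF pinv_projection(1,3,2), of X Z]
    by (simp add: P_def Zp_def)
  have s: "s = min_eigenvalue (transpose X ** X)"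
    by (simp add: s_def sigma_min_sq)
  show ?thesis
  proof (cases "s = 0")
    case True
    have "(real CARD('r) - real (rank Z)) * s\<^sup>2 + 2 * c * s * (norm Zp)\<^sup>2
        - c\<^sup>2 * (norm (Zp ** transpose Zp))\<^sup>2 = - (c\<^sup>2 * (norm (Zp ** transpose Zp))\<^sup>2)"
      using True by simp
    moreover have "0 \<le> c\<^sup>2 * (norm (Zp ** transpose Zp))\<^sup>2"
      by simp
    moreover have "0 \<le> (norm (X ** transpose X - Z ** transpose Z))\<^sup>2 - (norm (Zp ** transpose Zp))\<^sup>2"
      unfolding split by simp
    ultimately show ?thesis
      by linarith
  next
    case False
    then have "0 < min_eigenvalue (transpose X ** X)"
      using gram_min_eigenvalue_nonneg[of X] s by simp
    from gram_difference_lower_bound[OF this assms(3,4), of Z] show ?thesis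
      unfolding split unfolding s P_def Zp_def .
  qed
qed

section \<open>The bounds on \<open>\<alpha>\<close> and \<open>\<beta>\<close>\<close>

lemma rank_ratio_amplify:
  fixes q r s L :: real
  assumes "1 \<le> q" "q \<le> r" "L \<le> q * s\<^sup>2"
  shows "r / q * L \<le> (r - q) * s\<^sup>2 + L"
proof -
  have "(r - q) * L \<le> (r - q) * (q * s\<^sup>2)"
    using assms(2,3) by (intro mult_left_mono) auto
  then show ?thesis
    using assms(1) by (simp add: field_simps)
qed

context
  fixes s t f D q r :: real
  assumes nonneg: "0 \<le> s" "0 \<le> t" and pos: "0 < f" "0 < D" and q: "1 \<le> q" "q \<le> r"
    and trace_bound: "t\<^sup>2 \<le> q * f\<^sup>2"
    and key: "\<And>c. 0 \<le> c \<Longrightarrow> c \<le> 1 \<Longrightarrow> (r - q) * s\<^sup>2 + 2 * c * s * t - c\<^sup>2 * f\<^sup>2 \<le> D\<^sup>2 - f\<^sup>2"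
begin

lemma bound_if_beta_le_alpha:
  assumes "s / D * (t / f) \<le> f / D"
  shows "(f / D)\<^sup>2 + r / q * (s / D * (t / f))\<^sup>2 \<le> 1"
proof -
  define L where "L = (s * t)\<^sup>2 / f\<^sup>2"
  have "s * t \<le> f\<^sup>2"
    using assms pos by (simp add: field_simps power2_eq_square)
  then have "0 \<le> s * t / f\<^sup>2" "s * t / f\<^sup>2 \<le> 1"
    using nonneg pos by simp_all
  moreover have "2 * (s * t / f\<^sup>2) * s * t - (s * t / f\<^sup>2)\<^sup>2 * f\<^sup>2 = L"
    using pos by (simp add: L_def power2_eq_square field_simps)
  ultimately have "(r - q) * s\<^sup>2 + L \<le> D\<^sup>2 - f\<^sup>2"
    using key by fastforce
  moreover have L_le: "L \<le> q * s\<^sup>2"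
    using pos mult_right_mono[OF trace_bound, of "s\<^sup>2"]
    by (simp add: L_def divide_le_eq power_mult_distrib mult_ac)
  ultimately have "f\<^sup>2 + r / q * L \<le> D\<^sup>2"
    using rank_ratio_amplify[OF q L_le] by linarith
  then show ?thesis
    using pos by (simp add: L_def power_divide power_mult_distrib field_simps)
qed

lemma bound_if_alpha_le_beta:
  assumes "f / D \<le> s / D * (t / f)"
  shows "f / D \<le> 1 / sqrt (1 + r / q)"
proof -
  have st: "f\<^sup>2 \<le> s * t"
    using assms pos by (simp add: field_simps power2_eq_square)
  with key[of 1] have "(r - q) * s\<^sup>2 + f\<^sup>2 \<le> D\<^sup>2 - f\<^sup>2"
    by simp
  moreover have f_le: "f\<^sup>2 \<le> q * s\<^sup>2"
  proof -
    have "0 < s * t"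
      using st zero_less_power[OF pos(1), of 2] by linarith
    then have "0 < t"
      using nonneg by (simp add: zero_less_mult_iff)
    have "t * t \<le> (q * s) * t"
      using order_trans[OF trace_bound mult_left_mono[OF st]] q
      by (simp add: power2_eq_square mult_ac)
    then have "t \<le> q * s"
      using \<open>0 < t\<close> by (simp add: mult_le_cancel_right)
    then show ?thesis
      using st mult_left_mono[OF \<open>t \<le> q * s\<close> nonneg(1)] by (simp add: power2_eq_square mult_ac)
  qed
  ultimately have "f\<^sup>2 * (1 + r / q) \<le> D\<^sup>2"
    using rank_ratio_amplify[OF q f_le] by (simp add: algebra_simps)
  then have "(f / D)\<^sup>2 \<le> 1 / (1 + r / q)"
    using pos q by (simp add: power_divide field_simps)
  then have "sqrt ((f / D)\<^sup>2) \<le> 1 / sqrt (1 + r / q)"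
    by (metis real_sqrt_le_mono real_sqrt_divide real_sqrt_one)
  then show ?thesis
    using pos by simp
qed

end

lemma gram_alpha_beta_bounds:
  fixes X Z :: "real^'r^'n"
  defines "Zp \<equiv> (mat 1 - X ** pinv X) ** Z"
    and "D \<equiv> norm (X ** transpose X - Z ** transpose Z)"
  defines "\<alpha> \<equiv> norm (Zp ** transpose Zp) / D"
    and "\<beta> \<equiv> (sigma_min X)\<^sup>2 / D * (trace (Zp ** transpose Zp) / norm (Zp ** transpose Zp))"
    and "\<rho> \<equiv> real CARD('r) / real (rank Z)"
  assumes neq: "X ** transpose X \<noteq> Z ** transpose Z" and "Zp \<noteq> 0"
    and rank: "1 \<le> rank Z" "rank Z \<le> CARD('r)"
  shows "(\<beta> \<le> \<alpha> \<longrightarrow> \<alpha>\<^sup>2 + \<rho> * \<beta>\<^sup>2 \<le> 1) \<and> (\<alpha> \<le> \<beta> \<longrightarrow> \<alpha> \<le> 1 / sqrt (1 + \<rho>))"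
proof -
  define f where "f = norm (Zp ** transpose Zp)"
  define t where "t = trace (Zp ** transpose Zp)"
  have "0 < D"
    using neq by (simp add: D_def)
  have "0 < f"
    using \<open>Zp \<noteq> 0\<close> trace_mult_transpose[of Zp] by (auto simp: f_def trace_def)
  have h: "0 \<le> (sigma_min X)\<^sup>2" "0 \<le> t" "1 \<le> real (rank Z)" "real (rank Z) \<le> real CARD('r)"
    using rank by (simp_all add: t_def trace_mult_transpose)
  have trace_bound: "t\<^sup>2 \<le> real (rank Z) * f\<^sup>2"
    using norm_sq_sq_le_rank[of "mat 1 - X ** pinv X" Z]
    by (simp add: t_def f_def Zp_def trace_mult_transpose)
  have key: "(real CARD('r) - real (rank Z)) * ((sigma_min X)\<^sup>2)\<^sup>2
      + 2 * c * (sigma_min X)\<^sup>2 * t - c\<^sup>2 * f\<^sup>2 \<le> D\<^sup>2 - f\<^sup>2" if "0 \<le> c" "c \<le> 1" for c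
    using gram_difference_key_inequality[OF that, where X=X and Z=Z]
    by (simp add: t_def f_def D_def Zp_def trace_mult_transpose)
  note bounds = bound_if_beta_le_alpha[OF h(1,2) \<open>0 < f\<close> \<open>0 < D\<close> h(3,4) trace_bound key]
    bound_if_alpha_le_beta[OF h(1,2) \<open>0 < f\<close> \<open>0 < D\<close> h(3,4) trace_bound key]
  show ?thesis
    unfolding \<alpha>_def \<beta>_def \<rho>_def f_def[symmetric] t_def[symmetric] using bounds by blast
qed

theorem lemma11:
  fixes X Z :: "real^'r^'n"
  assumes neq: "X ** transpose X \<noteq> Z ** transpose Z"
    and rk1: "1 \<le> rank Z" and rk2: "rank Z \<le> CARD('r)"
  shows "let Zp = (mat 1 - X ** pinv X) ** Z;
             D = frob_norm (X ** transpose X - Z ** transpose Z);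
             \<alpha> = frob_norm (Zp ** transpose Zp) / D;
             \<beta> = (if Zp = 0 then (sigma_min X)^2 / D
                  else ((sigma_min X)^2 / D) *
                       (trace (Zp ** transpose Zp) / frob_norm (Zp ** transpose Zp)));
             \<rho> = real CARD('r) / real (rank Z)
         in (\<beta> \<le> \<alpha> \<longrightarrow> \<alpha>^2 + \<rho> * \<beta>^2 \<le> 1) \<and>
            (\<beta> \<ge> \<alpha> \<longrightarrow> \<alpha> \<le> 1 / sqrt (1 + \<rho>))"
proof (cases "(mat 1 - X ** pinv X) ** Z = 0")
  case True
  have "0 < norm (X ** transpose X - Z ** transpose Z)"
    using neq by simp
  with True show ?thesis
    by (simp add: Let_def frob_norm_eq_norm divide_le_0_iff)
next
  case False
  from gram_alpha_beta_bounds[OF neq False rk1 rk2] show ?thesis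
    by (simp add: Let_def frob_norm_eq_norm False)
qed

end
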